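(* Let $u_*>0$ be a positive solution of $n^{-1}\mathrm{Tr}\,G(u_*^2)=1$, and let $\tilde F(t)=-\mathcal L_n(-t^2)-t^2$. Then one can choose a sufficiently small $0<\kappa<u_*$ and a sufficiently large $C_0$ with $\log C_0^2>\mathcal L_n(0)+2$ such that there exist a contour $L_1\subset\{t:\Re t>0,\ \arg t\ge\pi/4\}$ and a constant $\sigma>0$ (depending on $L_1$) with $$iu_*+\kappa\in L_1,\qquad iC_0+C_0\in L_1,\qquad \Re\tilde F(t)\le\Re\tilde F(iu_* )-\sigma\quad\text{for } t\in L_1.$$
   Context: $A_0$ is a fixed $n\times n$ complex matrix and $z\in\mathbb C$; $Y_0(z)=(A_0-z)(A_0-z)^*$, $G(x)=(Y_0(z)+x)^{-1}$, $\mathcal L_n(x)=n^{-1}\log\det(Y_0(z)+x)$, where for $t$ in the upper half-plane $\mathcal L_n(-t^2)$ is defined by analytic continuation (so that $\Re\mathcal L_n(-t^2)=\frac12\int\log|\lambda-t^2|^2\,d\nu_{n,z}(\lambda)$, with $\nu_{n,z}$ the normalized eigenvalue counting measure of $Y_0(z)$). It is assumed that a positive solution $u_*$ of $n^{-1}\mathrm{Tr}\,G(u_*^2)=1$ exists. *)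

theory Defs
  imports "HOL-Complex_Analysis.Complex_Analysis"
begin

definition cadj :: "complex^'n^'n \<Rightarrow> complex^'n^'n" where
  "cadj M = (\<chi> i j. cnj (M $ j $ i))"

definition Y0 :: "complex^'n^'n \<Rightarrow> complex \<Rightarrow> complex^'n^'n" where
  "Y0 A z = (A - mat z) ** cadj (A - mat z)"

definition Gres :: "complex^'n^'n \<Rightarrow> complex \<Rightarrow> complex \<Rightarrow> complex^'n^'n" where
  "Gres A z x = matrix_inv (Y0 A z + mat x)"

text \<open>Real part of the (analytically continued) L_n(w) = n^{-1} log det (Y_0(z) + w),
  namely n^{-1} ln |det (Y_0(z) + w)| (valid whenever the determinant is nonzero).\<close>
definition ReLn :: "complex^'n^'n \<Rightarrow> complex \<Rightarrow> complex \<Rightarrow> real" where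
  "ReLn A z w = ln (cmod (det (Y0 A z + mat w))) / real CARD('n)"

definition ReFt :: "complex^'n^'n \<Rightarrow> complex \<Rightarrow> complex \<Rightarrow> real" where
  "ReFt A z t = - ReLn A z (- (t^2)) - Re (t^2)"

end

(*
  Since Y0 = N N^* is positive semidefinite, det (Y0 + v) = c * prod_i (v + lam_i) with all
  lam_i >= 0, so that Ftilde t = - (ln |c| + sum_i ln |lam_i - t^2|) / n - Re (t^2), and Jacobi's
  formula turns the saddle point equation into sum_i 1 / (ustar^2 + lam_i) = n.

  Moving horizontally from i ustar to kappa + i ustar decreases Ftilde strictly: each
  ln |lam_i - t^2| drops by less than kappa^2 / (ustar^2 + lam_i), which adds up to kappa^2 n,
  while - Re (t^2) drops by exactly kappa^2. From kappa + i ustar the contour first follows the hyperbola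
  Re (t^2) = kappa^2 - ustar^2 inside the sector, where every |lam_i - t^2| grows with Im (t^2),
  and then runs horizontally at height C0 to C0 + i C0, where |Im (t^2)| >= C0 dominates every
  |lam_i - t^2| at the starting point. Hence Ftilde stays below Ftilde (kappa + i ustar) on the
  whole contour.
*)
theory Submission
  imports Defs "HOL-Computational_Algebra.Fundamental_Theorem_Algebra"
begin

no_notation fps_nth (infixl \<open>$\<close> 75)

lemma matrix_inv_left:
  fixes A :: "'a::semiring_1^'n^'n"
  assumes "invertible A"
  shows "matrix_inv A ** A = mat 1"
  using assms unfolding invertible_def matrix_inv_def by (rule someI2_ex) auto

lemma det_row_axis_eq_matrix_inv_diag:
  fixes N :: "'a::field^'n^'n"
  assumes "det N \<noteq> 0"
  shows "det (\<chi> i. if i = k then axis k 1 else row i N) = matrix_inv N $ k $ k * det N"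
proof -
  have "matrix_inv N ** N = mat 1"
    using assms by (simp add: invertible_det_nz matrix_inv_left)
  then have unit_row: "(\<Sum>i\<in>UNIV. row k (matrix_inv N) $ i *s row i N) = axis k 1"
    by (simp add: vec_eq_iff axis_def row_def matrix_matrix_mult_def mat_def)
  show ?thesis
    using cramer_lemma_transpose[of k "row k (matrix_inv N)" N] unfolding unit_row by (simp add: row_def)
qed

lemma has_field_derivative_det_plus_mat:
  fixes M :: "'a::real_normed_field^'n^'n"
  shows "((\<lambda>w. det (M + mat w)) has_field_derivative
          (\<Sum>k\<in>UNIV. det (\<chi> i. if i = k then axis k 1 else row i (M + mat v)))) (at v)"
proof -
  define f where "f p i w = (M + mat w) $ i $ p i" for p :: "'n \<Rightarrow> 'n" and i w
  have entry: "(f p i has_field_derivative (if p i = i then 1 else 0)) (at v)" for p i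
    unfolding f_def by (auto simp: mat_def intro!: derivative_eq_intros)
  have prod_row_axis: "(if p k = k then 1 else 0) * (\<Prod>i\<in>UNIV-{k}. f p i v)
      = (\<Prod>i\<in>UNIV. (\<chi> i. if i = k then axis k 1 else row i (M + mat v)) $ i $ p i)" for p k
    using prod.remove[of UNIV k "\<lambda>i. (\<chi> i. if i = k then axis k 1 else row i (M + mat v)) $ i $ p i"]
    by (auto simp: f_def axis_def row_def intro!: prod.cong)
  have "((\<lambda>w. \<Sum>p | p permutes UNIV. of_int (sign p) * (\<Prod>i\<in>UNIV. f p i w)) has_field_derivative
      (\<Sum>p | p permutes UNIV. of_int (sign p) *
         (\<Sum>k\<in>UNIV. (if p k = k then 1 else 0) * (\<Prod>i\<in>UNIV-{k}. f p i v)))) (at v)"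
    by (intro DERIV_sum DERIV_cmult has_field_derivative_prod entry)
  also have "(\<Sum>p | p permutes UNIV. of_int (sign p) *
         (\<Sum>k\<in>UNIV. (if p k = k then 1 else 0) * (\<Prod>i\<in>UNIV-{k}. f p i v)))
      = (\<Sum>k\<in>UNIV. det (\<chi> i. if i = k then axis k 1 else row i (M + mat v)))"
    unfolding prod_row_axis det_def sum_distrib_left by (rule sum.swap)
  finally show ?thesis
    by (simp add: det_def f_def)
qed

lemma has_field_derivative_det_plus_mat_trace:
  fixes M :: "'a::real_normed_field^'n^'n"
  assumes "det (M + mat v) \<noteq> 0"
  shows "((\<lambda>w. det (M + mat w)) has_field_derivative
          trace (matrix_inv (M + mat v)) * det (M + mat v)) (at v)"
  using has_field_derivative_det_plus_mat[of M v]
  by (simp add: det_row_axis_eq_matrix_inv_diag[OF assms] trace_def sum_distrib_right)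

lemma mat_mult_vector: "(mat c :: 'a::semiring_1^'n^'n) *v x = c *s x"
proof -
  have "(\<Sum>j\<in>UNIV. (if i = j then c else 0) * x $ j) = c * x $ i" for i
    by (simp add: if_distrib[of "\<lambda>a. a * _"] cong: if_cong)
  then show ?thesis
    by (simp add: vec_eq_iff matrix_vector_mult_def mat_def)
qed

lemma sum_cnj_mult_mult_cadj:
  fixes N :: "complex^'n^'n"
  shows "(\<Sum>i\<in>UNIV. cnj (x$i) * ((N ** cadj N) *v x) $ i)
       = of_real (\<Sum>k\<in>UNIV. (cmod ((cadj N *v x) $ k))\<^sup>2)"
proof -
  have "(\<Sum>i\<in>UNIV. cnj (x$i) * ((N ** cadj N) *v x) $ i)
      = (\<Sum>i\<in>UNIV. \<Sum>j\<in>UNIV. \<Sum>k\<in>UNIV. cnj (x$i) * N$i$k * cnj (N$j$k) * x$j)"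
    unfolding cadj_def matrix_matrix_mult_def matrix_vector_mult_def
    by (simp add: sum_distrib_left sum_distrib_right mult_ac)
  also have "\<dots> = (\<Sum>i\<in>UNIV. \<Sum>k\<in>UNIV. \<Sum>j\<in>UNIV. cnj (x$i) * N$i$k * cnj (N$j$k) * x$j)"
    by (intro sum.cong refl sum.swap)
  also have "\<dots> = (\<Sum>k\<in>UNIV. \<Sum>i\<in>UNIV. \<Sum>j\<in>UNIV. cnj (x$i) * N$i$k * cnj (N$j$k) * x$j)"
    by (rule sum.swap)
  also have "\<dots> = (\<Sum>k\<in>UNIV. cnj ((cadj N *v x)$k) * (cadj N *v x)$k)"
    unfolding cadj_def matrix_vector_mult_def
    by (simp add: sum_distrib_left sum_distrib_right mult_ac)
  finally show ?thesis
    by (simp only: of_real_sum complex_norm_square mult.commute)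
qed

lemma det_mult_cadj_plus_mat_eq_0D:
  fixes N :: "complex^'n^'n"
  assumes "det (N ** cadj N + mat v) = 0"
  shows "\<exists>r\<ge>0. v = - of_real r"
proof -
  obtain x where "x \<noteq> 0" and ker: "(N ** cadj N + mat v) *v x = 0"
    using assms invertible_det_nz invertible_left_inverse matrix_left_invertible_ker by metis
  define S where "S = (\<Sum>k\<in>UNIV. (cmod ((cadj N *v x) $ k))\<^sup>2)"
  define T where "T = (\<Sum>i\<in>UNIV. (cmod (x $ i))\<^sup>2)"
  have "S \<ge> 0"
    unfolding S_def by (simp add: sum_nonneg)
  obtain i where "x $ i \<noteq> 0"
    using \<open>x \<noteq> 0\<close> by (metis vec_eq_iff zero_index)
  then have "T > 0"
    unfolding T_def by (intro sum_pos2[of _ i]) auto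
  have "0 = (\<Sum>i\<in>UNIV. cnj (x$i) * ((N ** cadj N + mat v) *v x) $ i)"
    by (simp add: ker)
  also have "\<dots> = (\<Sum>i\<in>UNIV. cnj (x$i) * ((N ** cadj N) *v x) $ i) + v * (\<Sum>i\<in>UNIV. cnj (x$i) * x$i)"
    by (simp add: matrix_vector_mult_add_rdistrib mat_mult_vector distrib_left sum.distrib
        sum_distrib_left mult_ac)
  also have "\<dots> = of_real S + v * of_real T"
    unfolding sum_cnj_mult_mult_cadj S_def T_def
    by (simp only: of_real_sum complex_norm_square mult.commute)
  finally have "v = - of_real (S / T)"
    using \<open>T > 0\<close> by (simp add: field_simps eq_neg_iff_add_eq_0)
  then show ?thesis
    using \<open>S \<ge> 0\<close> \<open>T > 0\<close> by (intro exI[of _ "S / T"]) simp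
qed

definition det_plus_mat_poly :: "'a::comm_ring_1^'n^'n \<Rightarrow> 'a poly" where
  "det_plus_mat_poly M = (\<Sum>p | p permutes UNIV.
     smult (of_int (sign p)) (\<Prod>i\<in>UNIV. [:M $ i $ p i, if i = p i then 1 else 0:]))"

lemma poly_det_plus_mat_poly: "poly (det_plus_mat_poly M) v = det (M + mat v)"
  by (auto simp: det_plus_mat_poly_def det_def poly_sum poly_prod mat_def intro!: sum.cong prod.cong)
     (simp add: if_distrib[of "\<lambda>a. v * a"] cong: if_cong)

lemma det_mult_cadj_plus_mat_nonzero:
  fixes N :: "complex^'n^'n"
  assumes "x > 0"
  shows "det (N ** cadj N + mat (of_real x)) \<noteq> 0"
proof
  assume "det (N ** cadj N + mat (of_real x)) = 0"
  then obtain r where "r \<ge> 0" "of_real x = - (of_real r :: complex)"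
    by (blast dest: det_mult_cadj_plus_mat_eq_0D)
  then have "x = - r"
    by (metis of_real_eq_iff of_real_minus)
  with assms \<open>r \<ge> 0\<close> show False
    by simp
qed

lemma det_mult_cadj_plus_mat_factor:
  fixes N :: "complex^'n^'n"
  obtains c :: complex and d :: nat and lam :: "nat \<Rightarrow> real"
  where "c \<noteq> 0" "\<And>i. i < d \<Longrightarrow> 0 \<le> lam i"
    "\<And>v. det (N ** cadj N + mat v) = c * (\<Prod>i<d. v + of_real (lam i))"
proof -
  define p where "p = det_plus_mat_poly (N ** cadj N)"
  have poly_p: "poly p v = det (N ** cadj N + mat v)" for v
    unfolding p_def poly_det_plus_mat_poly ..
  have "poly p 1 \<noteq> 0"
    using det_mult_cadj_plus_mat_nonzero[of 1 N] unfolding poly_p by simp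
  then have "p \<noteq> 0"
    by auto
  obtain root where roots: "smult (lead_coeff p) (\<Prod>i<degree p. [:- root i, 1:]) = p"
    using complex_poly_decompose' by blast
  have poly_p_roots: "poly p v = lead_coeff p * (\<Prod>i<degree p. v - root i)" for v
    by (subst roots[symmetric]) (simp add: poly_prod)
  have "\<exists>r\<ge>0. root i = - of_real r" if "i < degree p" for i
  proof -
    have "poly p (root i) = 0"
      unfolding poly_p_roots using that by (auto intro!: prod_zero)
    then show ?thesis
      unfolding poly_p by (rule det_mult_cadj_plus_mat_eq_0D)
  qed
  then obtain lam where lam: "\<And>i. i < degree p \<Longrightarrow> 0 \<le> lam i \<and> root i = - of_real (lam i)"
    by metis
  show ?thesis
  proof
    show "lead_coeff p \<noteq> 0"
      using \<open>p \<noteq> 0\<close> by simp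
    show "\<And>i. i < degree p \<Longrightarrow> 0 \<le> lam i"
      using lam by blast
    show "det (N ** cadj N + mat v) = lead_coeff p * (\<Prod>i<degree p. v + of_real (lam i))" for v
      unfolding poly_p[symmetric] poly_p_roots using lam by (auto intro!: prod.cong)
  qed
qed

lemma trace_matrix_inv_plus_mat:
  fixes M :: "'a::real_normed_field^'n^'n" and r :: "nat \<Rightarrow> 'a"
  assumes factor: "\<And>w. det (M + mat w) = c * (\<Prod>i<d. w + r i)"
    and nonsing: "det (M + mat v) \<noteq> 0"
  shows "trace (matrix_inv (M + mat v)) = (\<Sum>i<d. 1 / (v + r i))"
proof -
  have "v + r i \<noteq> 0" if "i < d" for i
    using nonsing that unfolding factor by auto
  then have "((\<lambda>w. \<Prod>i<d. w + r i) has_field_derivative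
      (\<Prod>i<d. v + r i) * (\<Sum>i<d. 1 / (v + r i))) (at v)"
    by (intro has_field_derivative_prod') (auto intro!: derivative_eq_intros)
  then have "((\<lambda>w. det (M + mat w)) has_field_derivative
      det (M + mat v) * (\<Sum>i<d. 1 / (v + r i))) (at v)"
    unfolding factor mult.assoc by (rule DERIV_cmult)
  then have "trace (matrix_inv (M + mat v)) * det (M + mat v) = det (M + mat v) * (\<Sum>i<d. 1 / (v + r i))"
    using has_field_derivative_det_plus_mat_trace[OF nonsing] DERIV_unique by blast
  then show ?thesis
    using nonsing by (simp add: mult.commute)
qed

text \<open>The real part of the paper's \<open>F\<close>-tilde, \<open>- L\<^sub>n(-t\<^sup>2) - t\<^sup>2\<close>, in terms of a
  factorisation \<open>det (Y\<^sub>0 + v) = c * (\<Prod>i<d. v + lam i)\<close> and the normalisation \<open>n\<close>.\<close>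

definition Ftilde :: "complex \<Rightarrow> (nat \<Rightarrow> real) \<Rightarrow> nat \<Rightarrow> real \<Rightarrow> complex \<Rightarrow> real" where
  "Ftilde c lam d n t = - ln (cmod (c * (\<Prod>i<d. of_real (lam i) - t\<^sup>2))) / n - Re (t\<^sup>2)"

lemma ln_norm_mult_prod:
  fixes f :: "nat \<Rightarrow> 'a::real_normed_field"
  assumes "c \<noteq> 0" "\<And>i. i < d \<Longrightarrow> f i \<noteq> 0"
  shows "ln (norm (c * (\<Prod>i<d. f i))) = ln (norm c) + (\<Sum>i<d. ln (norm (f i)))"
  using assms by (simp add: norm_mult ln_mult prod_pos flip: prod_norm) (rule ln_prod, auto)

lemma Ftilde_eq_sum_ln:
  assumes "c \<noteq> 0" "\<And>i. i < d \<Longrightarrow> of_real (lam i) - t\<^sup>2 \<noteq> 0"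
  shows "Ftilde c lam d n t = - (ln (cmod c) + (\<Sum>i<d. ln (cmod (of_real (lam i) - t\<^sup>2)))) / n - Re (t\<^sup>2)"
  unfolding Ftilde_def using ln_norm_mult_prod[OF assms(1), of d "\<lambda>i. of_real (lam i) - t\<^sup>2"] assms(2)
  by simp

lemma Ftilde_le_Ftilde:
  assumes "c \<noteq> 0" "n > 0"
    and factors_le: "\<And>i. i < d \<Longrightarrow> cmod (of_real (lam i) - s\<^sup>2) \<le> cmod (of_real (lam i) - t\<^sup>2)"
    and factors_nz: "\<And>i. i < d \<Longrightarrow> of_real (lam i) - s\<^sup>2 \<noteq> 0"
    and "Re (s\<^sup>2) \<le> Re (t\<^sup>2)"
  shows "Ftilde c lam d n t \<le> Ftilde c lam d n s"
proof -
  have "0 < cmod (c * (\<Prod>i<d. of_real (lam i) - s\<^sup>2))"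
    using assms(1) factors_nz by simp
  moreover have "cmod (c * (\<Prod>i<d. of_real (lam i) - s\<^sup>2))
      \<le> cmod (c * (\<Prod>i<d. of_real (lam i) - t\<^sup>2))"
    unfolding norm_mult prod_norm[symmetric] by (intro mult_left_mono prod_mono) (auto simp: factors_le)
  ultimately have "ln (cmod (c * (\<Prod>i<d. of_real (lam i) - s\<^sup>2)))
      \<le> ln (cmod (c * (\<Prod>i<d. of_real (lam i) - t\<^sup>2)))"
    by (rule ln_mono[rotated])
  then have "ln (cmod (c * (\<Prod>i<d. of_real (lam i) - s\<^sup>2))) / n
      \<le> ln (cmod (c * (\<Prod>i<d. of_real (lam i) - t\<^sup>2))) / n"
    by (rule divide_right_mono) (use \<open>n > 0\<close> in simp)
  then show ?thesis
    unfolding Ftilde_def using assms(5) by linarith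
qed

text \<open>With \<open>a = u\<^sup>2 + lam\<close> and \<open>w = lam - (k + \<i> u)\<^sup>2\<close>, the bound \<open>ln y \<ge> 1 - 1/y\<close> for
  \<open>y = \<bar>w\<bar>\<^sup>2 / a\<^sup>2\<close> reduces the claim to the polynomial inequality \<open>a\<^sup>3 < \<bar>w\<bar>\<^sup>2 (a + 2 k\<^sup>2)\<close>.\<close>

lemma ln_norm_shifted_square_gt:
  fixes lam k u :: real
  assumes "0 \<le> lam" "0 < k" "k < u"
  shows "ln (u\<^sup>2 + lam) - k\<^sup>2 / (u\<^sup>2 + lam) < ln (cmod (of_real lam - (Complex k u)\<^sup>2))"
proof -
  define a where "a = u\<^sup>2 + lam"
  define w where "w = of_real lam - (Complex k u)\<^sup>2"
  define Q where "Q = (a - k\<^sup>2)\<^sup>2 + (2*k*u)\<^sup>2"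
  have "a > 0"
    using assms unfolding a_def by (auto intro: add_pos_nonneg)
  have "Q > 0"
    using assms unfolding Q_def by (intro add_nonneg_pos) auto
  have "(cmod w)\<^sup>2 = Q"
    unfolding w_def Q_def a_def cmod_power2 by (simp add: power2_eq_square algebra_simps)
  then have ln_Q: "ln Q = 2 * ln (cmod w)"
    using \<open>Q > 0\<close> by (metis ln_realpow of_nat_numeral)
  have "Q * (a + 2 * k\<^sup>2) - a ^ 3 = k\<^sup>2 * (a * (4 * u\<^sup>2 - 3 * k\<^sup>2) + 2 * k ^ 4 + 8 * k\<^sup>2 * u\<^sup>2)"
    unfolding Q_def by algebra
  moreover have "k\<^sup>2 < u\<^sup>2"
    using assms by (simp add: power_strict_mono)
  ultimately have "a ^ 3 < Q * (a + 2 * k\<^sup>2)"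
    using assms \<open>a > 0\<close> by (smt (verit) mult_pos_pos zero_less_power)
  then have "a\<^sup>2 / Q - 1 < 2 * k\<^sup>2 / a"
    using \<open>a > 0\<close> \<open>Q > 0\<close> by (simp add: field_simps power2_eq_square power3_eq_cube)
  moreover have "ln (a\<^sup>2 / Q) \<le> a\<^sup>2 / Q - 1"
    using \<open>a > 0\<close> \<open>Q > 0\<close> by (intro ln_le_minus_one) simp
  moreover have "ln (a\<^sup>2 / Q) = 2 * ln a - ln Q"
    using \<open>a > 0\<close> \<open>Q > 0\<close> by (simp add: ln_div ln_realpow)
  ultimately show ?thesis
    unfolding a_def[symmetric] w_def[symmetric] ln_Q by (simp add: field_simps)
qed

lemma Ftilde_saddle_shift_lt:
  assumes "c \<noteq> 0" "\<And>i. i < d \<Longrightarrow> 0 \<le> lam i" "n > 0" "0 < k" "k < u"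
    and saddle: "(\<Sum>i<d. 1 / (u\<^sup>2 + lam i)) = n"
  shows "Ftilde c lam d n (Complex k u) < Ftilde c lam d n (Complex 0 u)"
proof -
  have "d \<noteq> 0"
    using saddle \<open>n > 0\<close> by (cases "d = 0") auto
  have "u\<^sup>2 > 0"
    using assms by simp
  have square_shift: "(Complex k u)\<^sup>2 = Complex (k\<^sup>2 - u\<^sup>2) (2 * k * u)"
    and square_saddle: "(Complex 0 u)\<^sup>2 = - of_real (u\<^sup>2)"
    by (simp_all add: complex_eq_iff power2_eq_square)
  have shift_nz: "of_real (lam i) - (Complex k u)\<^sup>2 \<noteq> 0" for i
    using \<open>0 < k\<close> \<open>k < u\<close> by (auto simp: square_shift complex_eq_iff)
  have saddle_factor: "of_real (lam i) - (Complex 0 u)\<^sup>2 = of_real (u\<^sup>2 + lam i)" for i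
    by (simp add: square_saddle)
  have saddle_factor_norm: "cmod (of_real (lam i) - (Complex 0 u)\<^sup>2) = u\<^sup>2 + lam i" if "i < d" for i
    using assms(2)[OF that] unfolding saddle_factor norm_of_real by simp
  have saddle_nz: "of_real (lam i) - (Complex 0 u)\<^sup>2 \<noteq> 0" if "i < d" for i
    using saddle_factor_norm[OF that] add_pos_nonneg[OF \<open>u\<^sup>2 > 0\<close> assms(2)[OF that]]
    by (metis norm_zero less_irrefl)
  have "(\<Sum>i<d. ln (u\<^sup>2 + lam i) - k\<^sup>2 / (u\<^sup>2 + lam i))
      < (\<Sum>i<d. ln (cmod (of_real (lam i) - (Complex k u)\<^sup>2)))"
    using \<open>d \<noteq> 0\<close> assms(2,4,5) by (intro sum_strict_mono ln_norm_shifted_square_gt) auto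
  also have "(\<Sum>i<d. ln (u\<^sup>2 + lam i) - k\<^sup>2 / (u\<^sup>2 + lam i))
      = (\<Sum>i<d. ln (cmod (of_real (lam i) - (Complex 0 u)\<^sup>2))) - k\<^sup>2 * n"
    unfolding sum_subtractf saddle[symmetric] sum_distrib_left by (simp add: saddle_factor_norm)
  finally have "((\<Sum>i<d. ln (cmod (of_real (lam i) - (Complex 0 u)\<^sup>2))) - k\<^sup>2 * n) / n
      < (\<Sum>i<d. ln (cmod (of_real (lam i) - (Complex k u)\<^sup>2))) / n"
    using \<open>n > 0\<close> by (rule divide_strict_right_mono)
  then have "(\<Sum>i<d. ln (cmod (of_real (lam i) - (Complex 0 u)\<^sup>2))) / n - k\<^sup>2
      < (\<Sum>i<d. ln (cmod (of_real (lam i) - (Complex k u)\<^sup>2))) / n"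
    using \<open>n > 0\<close> by (simp add: diff_divide_distrib)
  moreover have "Ftilde c lam d n (Complex k u)
      = - (ln (cmod c) + (\<Sum>i<d. ln (cmod (of_real (lam i) - (Complex k u)\<^sup>2)))) / n - (k\<^sup>2 - u\<^sup>2)"
    using Ftilde_eq_sum_ln[OF \<open>c \<noteq> 0\<close> shift_nz] by (simp add: square_shift)
  moreover have "Ftilde c lam d n (Complex 0 u)
      = - (ln (cmod c) + (\<Sum>i<d. ln (cmod (of_real (lam i) - (Complex 0 u)\<^sup>2)))) / n + u\<^sup>2"
    using Ftilde_eq_sum_ln[OF \<open>c \<noteq> 0\<close> saddle_nz] by (simp add: square_saddle)
  ultimately show ?thesis
    by (simp add: diff_divide_distrib add_divide_distrib)
qed

lemma Arg_ge_pi_div_4: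
  assumes "0 < Re t" "Re t \<le> Im t"
  shows "pi / 4 \<le> Arg t"
proof -
  have "1 \<le> Im t / Re t"
    using assms by simp
  then have "arctan 1 \<le> arctan (Im t / Re t)"
    by (rule arctan_monotone')
  then show ?thesis
    using arg_conv_arctan[OF assms(1)] by simp
qed

lemma csqrt_in_sector:
  assumes "Re w \<le> 0" "0 < Im w"
  shows "0 < Re (csqrt w) \<and> Re (csqrt w) \<le> Im (csqrt w)"
proof -
  define t where "t = csqrt w"
  have w: "Re w = (Re t)\<^sup>2 - (Im t)\<^sup>2" "Im w = 2 * Re t * Im t"
    unfolding t_def by (metis Re_power2 power2_csqrt) (metis Im_power2 power2_csqrt)
  have "Re t \<noteq> 0"
    using w(2) assms(2) by auto
  then have "0 < Re t"
    using Re_csqrt[of w] unfolding t_def by linarith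
  then have "0 < Im t"
    using w(2) assms(2) by (simp add: zero_less_mult_iff)
  have "(Re t)\<^sup>2 \<le> (Im t)\<^sup>2"
    using w(1) assms(1) by linarith
  then have "Re t \<le> Im t"
    by (rule power2_le_imp_le) (use \<open>0 < Im t\<close> in simp)
  with \<open>0 < Re t\<close> show ?thesis
    unfolding t_def by simp
qed

lemma norm_le_norm_of_Re_eq:
  assumes "Re z = Re w" "\<bar>Im z\<bar> \<le> \<bar>Im w\<bar>"
  shows "cmod z \<le> cmod w"
  using assms unfolding cmod_def by (simp add: abs_le_square_iff)

lemma Ftilde_le_of_Re_square_eq:
  assumes "c \<noteq> 0" "n > 0" "Re (t\<^sup>2) = Re (s\<^sup>2)" "Im (s\<^sup>2) \<noteq> 0" "\<bar>Im (s\<^sup>2)\<bar> \<le> \<bar>Im (t\<^sup>2)\<bar>"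
  shows "Ftilde c lam d n t \<le> Ftilde c lam d n s"
  using assms by (intro Ftilde_le_Ftilde norm_le_norm_of_Re_eq) (auto simp: complex_eq_iff)

lemma Ftilde_le_of_Im_square_ge:
  assumes "c \<noteq> 0" "n > 0" "\<And>i. i < d \<Longrightarrow> of_real (lam i) - s\<^sup>2 \<noteq> 0" "Re (s\<^sup>2) \<le> Re (t\<^sup>2)"
    and "(\<Sum>i<d. cmod (of_real (lam i) - s\<^sup>2)) \<le> \<bar>Im (t\<^sup>2)\<bar>"
  shows "Ftilde c lam d n t \<le> Ftilde c lam d n s"
proof (rule Ftilde_le_Ftilde)
  fix i assume "i < d"
  then have "cmod (of_real (lam i) - s\<^sup>2) \<le> (\<Sum>i<d. cmod (of_real (lam i) - s\<^sup>2))"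
    by (intro member_le_sum) auto
  also have "\<dots> \<le> \<bar>Im (of_real (lam i) - t\<^sup>2)\<bar>"
    using assms(5) by simp
  also have "\<dots> \<le> cmod (of_real (lam i) - t\<^sup>2)"
    by (rule abs_Im_le_cmod)
  finally show "cmod (of_real (lam i) - s\<^sup>2) \<le> cmod (of_real (lam i) - t\<^sup>2)" .
qed (use assms in auto)

lemma csqrt_vertical_linepath:
  assumes "Re w0 \<le> 0" "0 < Im w0" "Re w1 = Re w0" "Im w0 \<le> Im w1"
  shows "valid_path (csqrt \<circ> linepath w0 w1)"
    and "\<And>t. t \<in> path_image (csqrt \<circ> linepath w0 w1) \<Longrightarrow>
           0 < Re t \<and> Re t \<le> Im t \<and> Re (t\<^sup>2) = Re w0 \<and> Im w0 \<le> Im (t\<^sup>2)"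
proof -
  have segment: "Re w = Re w0 \<and> Im w0 \<le> Im w" if "w \<in> closed_segment w0 w1" for w
    using that assms by (auto simp: closed_segment_same_Re closed_segment_eq_real_ivl)
  have "closed_segment w0 w1 \<subseteq> - \<real>\<^sub>\<le>\<^sub>0"
  proof
    fix w assume "w \<in> closed_segment w0 w1"
    then have "0 < Im w"
      using segment assms(2) by fastforce
    then show "w \<in> - \<real>\<^sub>\<le>\<^sub>0"
      by (auto simp: complex_nonpos_Reals_iff)
  qed
  then show "valid_path (csqrt \<circ> linepath w0 w1)"
    by (intro valid_path_compose_holomorphic[OF valid_path_linepath holomorphic_on_csqrt]) auto
  fix t assume "t \<in> path_image (csqrt \<circ> linepath w0 w1)"
  then obtain w where "w \<in> closed_segment w0 w1" "t = csqrt w"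
    by (auto simp: path_image_compose)
  with segment[of w] csqrt_in_sector[of w] assms(1,2)
  show "0 < Re t \<and> Re t \<le> Im t \<and> Re (t\<^sup>2) = Re w0 \<and> Im w0 \<le> Im (t\<^sup>2)"
    by auto
qed

lemma Ftilde_le_on_horizontal_segment:
  assumes "c \<noteq> 0" "n > 0" "\<And>i. i < d \<Longrightarrow> of_real (lam i) - s\<^sup>2 \<noteq> 0"
    and "1 \<le> X" "X \<le> C0" "Re (s\<^sup>2) = X\<^sup>2 - C0\<^sup>2" "(\<Sum>i<d. cmod (of_real (lam i) - s\<^sup>2)) \<le> C0"
    and "t \<in> closed_segment (Complex X C0) (Complex C0 C0)"
  shows "0 < Re t \<and> Re t \<le> Im t \<and> Ftilde c lam d n t \<le> Ftilde c lam d n s"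
proof -
  have t: "Im t = C0" "X \<le> Re t" "Re t \<le> C0"
    using assms(5,8) by (auto simp: closed_segment_same_Im closed_segment_eq_real_ivl)
  have "X\<^sup>2 \<le> (Re t)\<^sup>2"
    using t assms(4) by (intro power_mono) auto
  then have Re_le: "Re (s\<^sup>2) \<le> Re (t\<^sup>2)"
    using assms(6) t by (simp add: Re_power2)
  have "0 \<le> C0"
    using assms(4,5) by linarith
  have "1 * C0 \<le> (2 * Re t) * C0"
    using t assms(4) \<open>0 \<le> C0\<close> by (intro mult_right_mono) auto
  also have "\<dots> = \<bar>Im (t\<^sup>2)\<bar>"
    using t assms(4) \<open>0 \<le> C0\<close> by (simp add: Im_power2 abs_mult)
  finally have "(\<Sum>i<d. cmod (of_real (lam i) - s\<^sup>2)) \<le> \<bar>Im (t\<^sup>2)\<bar>"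
    using assms(7) by simp
  then have "Ftilde c lam d n t \<le> Ftilde c lam d n s"
    using Re_le assms(1-3) by (intro Ftilde_le_of_Im_square_ge)
  with t assms(4) show ?thesis
    by simp
qed

lemma corner_abscissa_bounds:
  fixes k u C0 :: real
  assumes "0 < k" "k < u" "u + 1 \<le> C0"
  defines "X \<equiv> sqrt (C0\<^sup>2 + k\<^sup>2 - u\<^sup>2)"
  shows "X\<^sup>2 = C0\<^sup>2 + k\<^sup>2 - u\<^sup>2" "1 \<le> X" "k \<le> X" "X \<le> C0"
proof -
  have "k\<^sup>2 < u\<^sup>2"
    using assms(1,2) by (simp add: power_strict_mono)
  have "(u + 1)\<^sup>2 \<le> C0\<^sup>2"
    using assms(1-3) by (intro power_mono) auto
  then have "u\<^sup>2 + 1 \<le> C0\<^sup>2"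
    using assms(1,2) by (simp add: power2_sum)
  then have "0 \<le> C0\<^sup>2 + k\<^sup>2 - u\<^sup>2"
    using zero_le_power2[of k] by linarith
  then have X_sq: "X\<^sup>2 = C0\<^sup>2 + k\<^sup>2 - u\<^sup>2" and "0 \<le> X"
    unfolding X_def by simp_all
  show "X\<^sup>2 = C0\<^sup>2 + k\<^sup>2 - u\<^sup>2"
    by (fact X_sq)
  have "0 \<le> C0"
    using assms(1-3) by linarith
  have "1 \<le> X\<^sup>2"
    using X_sq \<open>u\<^sup>2 + 1 \<le> C0\<^sup>2\<close> zero_le_power2[of k] by linarith
  then show "1 \<le> X"
    using \<open>0 \<le> X\<close> by (intro power2_le_imp_le[of 1 X]) simp_all
  show "k \<le> X"
    by (rule power2_le_imp_le) (use X_sq \<open>u\<^sup>2 + 1 \<le> C0\<^sup>2\<close> \<open>0 \<le> X\<close> in auto)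
  show "X \<le> C0"
    by (rule power2_le_imp_le) (use X_sq \<open>k\<^sup>2 < u\<^sup>2\<close> \<open>0 \<le> C0\<close> in auto)
qed

lemma exists_contour_Ftilde_le:
  assumes "c \<noteq> 0" "n > 0" "0 < k" "k < u" "u + 1 \<le> C0"
    and "(\<Sum>i<d. cmod (of_real (lam i) - (Complex k u)\<^sup>2)) \<le> C0"
  shows "\<exists>g. valid_path g \<and> path_image g \<subseteq> {t. 0 < Re t \<and> Re t \<le> Im t} \<and>
           Complex k u \<in> path_image g \<and> Complex C0 C0 \<in> path_image g \<and>
           (\<forall>t\<in>path_image g. Ftilde c lam d n t \<le> Ftilde c lam d n (Complex k u))"
proof -
  define s where "s = Complex k u"
  have s_sq: "s\<^sup>2 = Complex (k\<^sup>2 - u\<^sup>2) (2 * k * u)"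
    unfolding s_def by (simp add: complex_eq_iff power2_eq_square)
  have s_nz: "of_real (lam i) - s\<^sup>2 \<noteq> 0" for i
    using assms(3,4) by (auto simp: s_sq complex_eq_iff)
  define X where "X = sqrt (C0\<^sup>2 + k\<^sup>2 - u\<^sup>2)"
  have X: "X\<^sup>2 = C0\<^sup>2 + k\<^sup>2 - u\<^sup>2" "1 \<le> X" "k \<le> X" "X \<le> C0"
    unfolding X_def using assms(3-5) by (rule corner_abscissa_bounds)+
  define corner where "corner = Complex X C0"
  have corner_sq: "corner\<^sup>2 = Complex (k\<^sup>2 - u\<^sup>2) (2 * X * C0)"
    unfolding corner_def using X(1) by (simp add: complex_eq_iff power2_eq_square)
  define arc where "arc = csqrt \<circ> linepath (s\<^sup>2) (corner\<^sup>2)"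
  define seg where "seg = linepath corner (Complex C0 C0)"
  have "k * u \<le> X * C0"
    using X(2,3) assms(3-5) by (intro mult_mono) auto
  then have arc_props: "valid_path arc"
      "\<And>t. t \<in> path_image arc \<Longrightarrow> 0 < Re t \<and> Re t \<le> Im t \<and> Re (t\<^sup>2) = Re (s\<^sup>2) \<and> Im (s\<^sup>2) \<le> Im (t\<^sup>2)"
    unfolding arc_def using csqrt_vertical_linepath[of "s\<^sup>2" "corner\<^sup>2"] assms(3,4)
    by (auto simp: s_sq corner_sq)
  have arc_ends: "pathstart arc = s" "pathfinish arc = corner"
    unfolding arc_def s_def corner_def using assms(3) X(2)
    by (auto simp: pathstart_compose pathfinish_compose intro!: csqrt_square)
  have arc_le: "Ftilde c lam d n t \<le> Ftilde c lam d n s" if "t \<in> path_image arc" for t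
    using arc_props(2)[OF that] assms by (intro Ftilde_le_of_Re_square_eq) (auto simp: s_sq)
  have seg_props: "0 < Re t \<and> Re t \<le> Im t \<and> Ftilde c lam d n t \<le> Ftilde c lam d n s"
    if "t \<in> path_image seg" for t
    using that assms(1,2,6) s_nz X(1,2,4)
    by (intro Ftilde_le_on_horizontal_segment) (auto simp: seg_def corner_def s_def[symmetric] s_sq)
  have image: "path_image (arc +++ seg) = path_image arc \<union> path_image seg"
    using arc_ends by (simp add: path_image_join seg_def)
  show ?thesis
    unfolding s_def[symmetric]
  proof (intro exI conjI)
    show "valid_path (arc +++ seg)"
      using arc_props(1) arc_ends by (intro valid_path_join) (auto simp: seg_def)
    show "path_image (arc +++ seg) \<subseteq> {t. 0 < Re t \<and> Re t \<le> Im t}"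
      unfolding image using arc_props(2) seg_props by blast
    show "s \<in> path_image (arc +++ seg)"
      unfolding image using pathstart_in_path_image[of arc] arc_ends by auto
    show "Complex C0 C0 \<in> path_image (arc +++ seg)"
      unfolding image using pathfinish_in_path_image[of seg] by (auto simp: seg_def)
    show "\<forall>t\<in>path_image (arc +++ seg). Ftilde c lam d n t \<le> Ftilde c lam d n s"
      unfolding image using arc_le seg_props by blast
  qed
qed

lemma exists_descent_contour:
  assumes "c \<noteq> 0" "\<And>i. i < d \<Longrightarrow> 0 \<le> lam i" "n > 0" "0 < k" "k < u"
    and saddle: "(\<Sum>i<d. 1 / (u\<^sup>2 + lam i)) = n"
  shows "\<exists>C1. \<forall>C0\<ge>C1. \<exists>g. valid_path g \<and> path_image g \<subseteq> {t. 0 < Re t \<and> pi / 4 \<le> Arg t} \<and>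
           Complex k u \<in> path_image g \<and> Complex C0 C0 \<in> path_image g \<and>
           (\<exists>\<sigma>>0. \<forall>t\<in>path_image g. Ftilde c lam d n t \<le> Ftilde c lam d n (Complex 0 u) - \<sigma>)"
proof (intro exI[of _ "max (u + 1) (\<Sum>i<d. cmod (of_real (lam i) - (Complex k u)\<^sup>2))"] allI impI)
  define \<sigma> where "\<sigma> = Ftilde c lam d n (Complex 0 u) - Ftilde c lam d n (Complex k u)"
  have "\<sigma> > 0"
    unfolding \<sigma>_def using Ftilde_saddle_shift_lt[OF assms] by simp
  fix C0 assume "max (u + 1) (\<Sum>i<d. cmod (of_real (lam i) - (Complex k u)\<^sup>2)) \<le> C0"
  then have C0: "u + 1 \<le> C0" "(\<Sum>i<d. cmod (of_real (lam i) - (Complex k u)\<^sup>2)) \<le> C0"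
    by simp_all
  obtain g where g: "valid_path g" "path_image g \<subseteq> {t. 0 < Re t \<and> Re t \<le> Im t}"
      "Complex k u \<in> path_image g" "Complex C0 C0 \<in> path_image g"
      "\<forall>t\<in>path_image g. Ftilde c lam d n t \<le> Ftilde c lam d n (Complex k u)"
    using exists_contour_Ftilde_le[OF assms(1,3-5) C0] by blast
  have "path_image g \<subseteq> {t. 0 < Re t \<and> pi / 4 \<le> Arg t}"
    using g(2) Arg_ge_pi_div_4 by blast
  moreover have "\<forall>t\<in>path_image g. Ftilde c lam d n t \<le> Ftilde c lam d n (Complex 0 u) - \<sigma>"
    using g(5) unfolding \<sigma>_def by simp
  ultimately show "\<exists>g. valid_path g \<and> path_image g \<subseteq> {t. 0 < Re t \<and> pi / 4 \<le> Arg t} \<and>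
      Complex k u \<in> path_image g \<and> Complex C0 C0 \<in> path_image g \<and>
      (\<exists>\<sigma>>0. \<forall>t\<in>path_image g. Ftilde c lam d n t \<le> Ftilde c lam d n (Complex 0 u) - \<sigma>)"
    using g(1,3,4) \<open>\<sigma> > 0\<close> by blast
qed

theorem lemma1:
  fixes A0 :: "complex^'n^'n" and z :: complex and ustar :: real
  assumes upos: "ustar > 0"
    and usol: "trace (Gres A0 z (complex_of_real (ustar^2))) / of_nat CARD('n) = 1"
  shows "\<exists>\<kappa>0>0. \<forall>\<kappa>. 0 < \<kappa> \<and> \<kappa> < \<kappa>0 \<longrightarrow> \<kappa> < ustar \<and>
           (\<exists>C1. \<forall>C0::real. C0 \<ge> C1 \<and>
               (det (Y0 A0 z) = 0 \<or> ln (C0^2) > ln (cmod (det (Y0 A0 z))) / real CARD('n) + 2)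
             \<longrightarrow> (\<exists>g. valid_path g \<and>
                    path_image g \<subseteq> {t. Re t > 0 \<and> Arg t \<ge> pi/4} \<and>
                    \<i> * complex_of_real ustar + complex_of_real \<kappa> \<in> path_image g \<and>
                    \<i> * complex_of_real C0 + complex_of_real C0 \<in> path_image g \<and>
                    (\<exists>\<sigma>>0. \<forall>t\<in>path_image g.
                        ReFt A0 z t \<le> ReFt A0 z (\<i> * complex_of_real ustar) - \<sigma>)))"
proof -
  obtain c d lam where "c \<noteq> 0" "\<And>i. i < (d::nat) \<Longrightarrow> 0 \<le> lam i"
    and factor: "\<And>v. det (Y0 A0 z + mat v) = c * (\<Prod>i<d. v + of_real (lam i))"
    using det_mult_cadj_plus_mat_factor[of "A0 - mat z", folded Y0_def] by blast
  define n where "n = real CARD('n)"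
  have "n > 0"
    unfolding n_def by simp
  have ReFt_eq: "ReFt A0 z = Ftilde c lam d n"
    by (simp add: fun_eq_iff ReFt_def ReLn_def Ftilde_def factor n_def)
  have "det (Y0 A0 z + mat (of_real (ustar\<^sup>2))) \<noteq> 0"
    unfolding Y0_def using upos by (intro det_mult_cadj_plus_mat_nonzero) simp
  then have "trace (Gres A0 z (of_real (ustar\<^sup>2))) = of_real (\<Sum>i<d. 1 / (ustar\<^sup>2 + lam i))"
    unfolding Gres_def by (subst trace_matrix_inv_plus_mat[OF factor]) simp_all
  then have saddle: "(\<Sum>i<d. 1 / (ustar\<^sup>2 + lam i)) = n"
    using usol unfolding n_def by (metis divide_eq_1_iff of_real_eq_iff of_real_of_nat_eq)
  have points: "\<And>y. \<i> * complex_of_real y = Complex 0 y" "\<And>x y. Complex 0 y + complex_of_real x = Complex x y"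
    by (simp_all add: complex_eq_iff)
  have contour: "\<exists>C1. \<forall>C0\<ge>C1. \<exists>g. valid_path g \<and> path_image g \<subseteq> {t. 0 < Re t \<and> pi / 4 \<le> Arg t} \<and>
      Complex \<kappa> ustar \<in> path_image g \<and> Complex C0 C0 \<in> path_image g \<and>
      (\<exists>\<sigma>>0. \<forall>t\<in>path_image g. Ftilde c lam d n t \<le> Ftilde c lam d n (Complex 0 ustar) - \<sigma>)"
    if "0 < \<kappa>" "\<kappa> < ustar" for \<kappa>
    using exists_descent_contour[OF \<open>c \<noteq> 0\<close> \<open>\<And>i. i < d \<Longrightarrow> 0 \<le> lam i\<close> \<open>n > 0\<close> that saddle] .
  have weaken: "(\<exists>C1. \<forall>C0\<ge>C1. P C0) \<Longrightarrow> \<exists>C1::real. \<forall>C0. C1 \<le> C0 \<and> Q C0 \<longrightarrow> P C0" for P Q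
    by blast
  show ?thesis
    unfolding ReFt_eq points
    by (rule exI[of _ ustar], intro conjI allI impI weaken contour) (use upos in auto)
qed

end
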